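(* Let $(\Omega,\mathcal{F},P)=([0,1],\mathcal{B}([0,1]),\lambda)$ with $\lambda$ Lebesgue measure. For $n\in\mathbb{N}$ and $\varepsilon_n\in(0,1)$ define $S^n_1(\omega)=-\frac{1}{\sqrt{\omega}}$ for $\omega\in[0,\varepsilon_n)$ and $S^n_1(\omega)=\frac{1}{(1-\omega)^{1/(n+1)}}$ for $\omega\in[\varepsilon_n,1]$. Then the sequence $(\varepsilon_n)\subset(0,1)$ can be chosen such that $E[S^n_1]=1$ for all $n\in\mathbb{N}$ and $\varepsilon_n\to0$ as $n\to\infty$. *)

theory Defs
  imports "HOL-Analysis.Analysis"
begin

text \<open>The random variable S^n_1 on [0,1] with threshold e:
  -1/sqrt w on [0,e), and 1/(1-w)^(1/(n+1)) on [e,1]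
  (the value at w = 1 is a null set; there 1/0 = 0 by HOL convention).\<close>
definition S1 :: "nat \<Rightarrow> real \<Rightarrow> real \<Rightarrow> real" where
  "S1 n e w = (if w < e then - 1 / sqrt w else 1 / ((1 - w) powr (1 / real (n + 1))))"

end

theory Submission
  imports Defs
begin

text \<open>With \<open>q = n/(n+1)\<close>, the antiderivatives \<open>-2\<surd>\<omega>\<close> and \<open>-(1-\<omega>)\<^sup>q/q\<close> give
  \<open>E[S\<^sup>n\<^sub>1] = (1-\<epsilon>)\<^sup>q/q - 2\<surd>\<epsilon>\<close>; the function has constant sign on each piece, so it is
  Lebesgue integrable. This mean is continuous in \<open>\<epsilon>\<close>, equals \<open>1 + 1/n\<close> at \<open>\<epsilon> = 0\<close> and \<open>-2\<close>
  at \<open>\<epsilon> = 1\<close>, so it takes the value 1 at some \<open>\<epsilon>\<^sub>n\<close>. Since \<open>(1-\<epsilon>)\<^sup>q \<le> 1\<close>, the mean is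
  at most \<open>1 + 1/n - 2\<surd>\<epsilon>\<close>, hence \<open>\<surd>\<epsilon>\<^sub>n \<le> 1/(2n)\<close> and \<open>\<epsilon>\<^sub>n \<rightarrow> 0\<close>.\<close>

lemma has_integral_inverse_sqrt:
  fixes c :: real
  assumes "0 \<le> c"
  shows "((\<lambda>x. 1 / sqrt x) has_integral 2 * sqrt c) {0..c}"
proof -
  have "x powr (-1/2) = 1 / sqrt x" if "x \<in> {0..c}" for x :: real
    using that by (simp add: powr_minus_divide powr_half_sqrt)
  moreover have "((\<lambda>x. x powr (-1/2)) has_integral c powr (1/2) / (1/2)) {0..c}"
    using has_integral_powr_from_0[of "-1/2" c] assms by simp
  ultimately have "((\<lambda>x. 1 / sqrt x) has_integral c powr (1/2) / (1/2)) {0..c}"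
    by (rule has_integral_eq)
  with assms show ?thesis
    by (simp add: powr_half_sqrt mult.commute)
qed

lemma has_integral_inverse_powr_one_minus:
  fixes p e :: real
  assumes "p < 1" "e \<le> 1"
  shows "((\<lambda>x. 1 / (1 - x) powr p) has_integral (1 - e) powr (1 - p) / (1 - p)) {e..1}"
proof -
  define G where "G x = - ((1 - x) powr (1 - p)) / (1 - p)" for x
  have "((\<lambda>x. 1 / (1 - x) powr p) has_integral G 1 - G e) {e..1}"
  proof (rule fundamental_theorem_of_calculus_interior)
    show "continuous_on {e..1} G"
      unfolding G_def using assms by (intro continuous_intros continuous_on_powr') auto
    fix x assume x: "x \<in> {e<..<1}"
    have "(G has_real_derivative (1 - x) powr (1 - p - 1)) (at x)"
      unfolding G_def using x assms by (auto intro!: derivative_eq_intros)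
    then show "(G has_vector_derivative (1 / (1 - x) powr p)) (at x)"
      using x by (simp add: has_real_derivative_iff_has_vector_derivative powr_minus_divide)
  qed (use assms in simp)
  then show ?thesis
    using assms by (simp add: G_def)
qed

lemma set_integrable_lborel_if_absolutely_integrable:
  fixes f :: "'a::euclidean_space \<Rightarrow> 'b::euclidean_space"
  assumes "f absolutely_integrable_on S" "f \<in> borel_measurable borel" "S \<in> sets borel"
  shows "set_integrable lborel S f"
  using assms integrable_completion[of "\<lambda>x. indicator S x *\<^sub>R f x" lborel]
  unfolding set_integrable_def by simp

definition S1_mean :: "nat \<Rightarrow> real \<Rightarrow> real" where
  "S1_mean n e = (1 - e) powr (real n / real (n + 1)) / (real n / real (n + 1)) - 2 * sqrt e"

lemma S1_measurable [measurable]: "S1 n e \<in> borel_measurable borel"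
  unfolding S1_def by measurable

lemma
  fixes n :: nat and e :: real
  assumes n: "n \<ge> 1" and e: "0 < e" "e < 1"
  shows S1_absolutely_integrable: "S1 n e absolutely_integrable_on {0..1}"
    and S1_has_integral: "(S1 n e has_integral S1_mean n e) {0..1}"
proof -
  define p where "p = 1 / real (n + 1)"
  have p: "p < 1" "1 - p = real n / real (n + 1)"
    using n by (auto simp: p_def field_simps)
  have S1_left: "S1 n e x = - (1 / sqrt x)" if "x \<in> {0..e} - {e}" for x
    using that by (simp add: S1_def)
  have S1_right: "S1 n e x = 1 / (1 - x) powr p" if "x \<in> {e..1}" for x
    using that by (simp add: S1_def p_def)
  have left: "((\<lambda>x. - (1 / sqrt x)) has_integral - 2 * sqrt e) {0..e}"
    using has_integral_neg[OF has_integral_inverse_sqrt] e by simp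
  have right: "((\<lambda>x. 1 / (1 - x) powr p) has_integral (1 - e) powr (1 - p) / (1 - p)) {e..1}"
    using p e by (intro has_integral_inverse_powr_one_minus) auto
  have S1_left_integral: "(S1 n e has_integral - 2 * sqrt e) {0..e}"
    using has_integral_spike[OF negligible_sing[of e] S1_left left] by simp
  have S1_right_integral: "(S1 n e has_integral (1 - e) powr (1 - p) / (1 - p)) {e..1}"
    by (rule has_integral_eq[OF _ right]) (simp add: S1_right)
  have "(\<lambda>x. 1 / sqrt x) absolutely_integrable_on {0..e}"
    using has_integral_inverse_sqrt[of e] e
    by (subst absolutely_integrable_on_iff_nonneg) (auto simp: integrable_on_def)
  then have "(\<lambda>x. - (1 / sqrt x)) absolutely_integrable_on {0..e}"
    using set_integrable_mult_right[of "-1"] by simp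
  then have "S1 n e absolutely_integrable_on {0..e}"
    by (rule absolutely_integrable_spike[OF _ negligible_sing[of e] S1_left])
  moreover have "S1 n e absolutely_integrable_on {e..1}"
    using S1_right_integral
    by (intro nonnegative_absolutely_integrable_1) (auto simp: integrable_on_def S1_right)
  moreover have "{0..e} \<union> {e..1} = {0..1::real}"
    using e by auto
  ultimately show "S1 n e absolutely_integrable_on {0..1}"
    by (metis absolutely_integrable_Un)
  show "(S1 n e has_integral S1_mean n e) {0..1}"
    using has_integral_combine[OF _ _ S1_left_integral S1_right_integral] e
    by (simp add: S1_mean_def p)
qed

lemma
  fixes n :: nat and e :: real
  assumes "n \<ge> 1" "0 < e" "e < 1"
  shows S1_set_integrable: "set_integrable lborel {0..1} (S1 n e)"
    and S1_set_integral: "(LINT w:{0..1}|lborel. S1 n e w) = S1_mean n e"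
proof -
  show integrable: "set_integrable lborel {0..1} (S1 n e)"
    using assms by (intro set_integrable_lborel_if_absolutely_integrable S1_absolutely_integrable) auto
  have "(LINT w:{0..1}|lborel. S1 n e w) = integral {0..1} (S1 n e)"
    by (rule set_borel_integral_eq_integral(2)[OF integrable])
  also have "\<dots> = S1_mean n e"
    using S1_has_integral[OF assms] by (rule integral_unique)
  finally show "(LINT w:{0..1}|lborel. S1 n e w) = S1_mean n e" .
qed

lemma S1_mean_le:
  assumes "n \<ge> 1" "0 \<le> e" "e \<le> 1"
  shows "S1_mean n e \<le> 1 + 1 / real n - 2 * sqrt e"
proof -
  define q where "q = real n / real (n + 1)"
  have "(1 - e) powr q \<le> 1"
    using assms by (intro powr_le1) (auto simp: q_def)
  then have "(1 - e) powr q / q \<le> 1 / q"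
    using assms by (intro divide_right_mono) (auto simp: q_def)
  also have "1 / q = 1 + 1 / real n"
    using assms by (simp add: q_def field_simps)
  finally show ?thesis
    by (simp add: S1_mean_def q_def)
qed

lemma S1_mean_eq_1:
  assumes n: "n \<ge> 1"
  obtains e where "0 < e" "e < 1" "e \<le> 1 / real n" "S1_mean n e = 1"
proof -
  have "continuous_on {0..1} (S1_mean n)"
    unfolding S1_mean_def using n by (intro continuous_intros continuous_on_powr') auto
  moreover have "S1_mean n 1 < 1" "S1_mean n 0 > 1"
    using n by (auto simp: S1_mean_def)
  ultimately obtain e where e: "0 \<le> e" "e \<le> 1" "S1_mean n e = 1"
    using IVT2'[of "S1_mean n" 1 1 0] by force
  have "e \<noteq> 0" "e \<noteq> 1"
    using e \<open>S1_mean n 1 < 1\<close> \<open>S1_mean n 0 > 1\<close> by auto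
  have "2 * sqrt e \<le> 1 / real n"
    using S1_mean_le[OF n e(1,2)] e(3) by simp
  then have "sqrt e \<le> 1 / real n"
    using real_sqrt_ge_zero[OF e(1)] by linarith
  moreover have "1 / real n \<le> 1"
    using n by simp
  ultimately have "sqrt e * sqrt e \<le> 1 * (1 / real n)"
    using e(1,2) by (intro mult_mono) auto
  then have "e \<le> 1 / real n"
    using e(1) by simp
  with e \<open>e \<noteq> 0\<close> \<open>e \<noteq> 1\<close> show thesis
    by (intro that) auto
qed

theorem lemma6p1:
  shows "\<exists>\<epsilon> :: nat \<Rightarrow> real.
    (\<forall>n\<ge>1. 0 < \<epsilon> n \<and> \<epsilon> n < 1 \<and>
       set_integrable lborel {0..1} (S1 n (\<epsilon> n)) \<and>
       (LINT w:{0..1}|lborel. S1 n (\<epsilon> n) w) = 1) \<and>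
    \<epsilon> \<longlonglongrightarrow> 0"
proof -
  have "\<forall>n. \<exists>e. n \<ge> 1 \<longrightarrow> 0 < e \<and> e < 1 \<and> e \<le> 1 / real n \<and> S1_mean n e = 1"
    by (metis S1_mean_eq_1)
  then obtain \<epsilon> where \<epsilon>: "\<And>n. n \<ge> 1 \<Longrightarrow>
      0 < \<epsilon> n \<and> \<epsilon> n < 1 \<and> \<epsilon> n \<le> 1 / real n \<and> S1_mean n (\<epsilon> n) = 1"
    by metis
  have "\<epsilon> \<longlonglongrightarrow> 0"
  proof (rule tendsto_sandwich[OF _ _ tendsto_const lim_1_over_n])
    show "\<forall>\<^sub>F n in sequentially. 0 \<le> \<epsilon> n" "\<forall>\<^sub>F n in sequentially. \<epsilon> n \<le> 1 / real n"
      using eventually_ge_at_top[of 1] by (eventually_elim; use \<epsilon> in force)+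
  qed
  with \<epsilon> show ?thesis
    by (intro exI[of _ \<epsilon>]) (auto simp: S1_set_integrable S1_set_integral)
qed

end
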